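(* Let $n\ge3$. The cycle graph on $n$ nodes is reachable (observable) from every pair of distinct nodes if and only if $n$ is prime.
   Context: The cycle graph on nodes $\{1,\dots,n\}$ has edges $\{i,(i\bmod n)+1\}$; its Laplacian $L$ has $2$ on the diagonal and $-1$ in entries $(i,j)$ with $j\equiv i\pm1\pmod n$. Reachable from a pair $\{i_1,i_2\}$ means that $(L,B)$ with $B=[e_{i_1}|e_{i_2}]$ is reachable (reachability matrix has rank $n$); observable means $(L,B^T)$ is observable. *)

theory Defs
  imports "Jordan_Normal_Form.DL_Rank" "Jordan_Normal_Form.Matrix"
begin

definition mat_rank :: "'a::field mat \<Rightarrow> nat" where
  "mat_rank A = vec_space.rank (dim_row A) A"

text \<open>Laplacian of the cycle graph on nodes 1..n; node k corresponds to matrix index k-1.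
  Diagonal entries 2, entries (i,j) with j = i+1 or i = j+1 (mod n) equal -1.\<close>
definition cycle_laplacian :: "nat \<Rightarrow> real mat" where
  "cycle_laplacian n = mat n n (\<lambda>(i,j). if i = j then 2
      else if j = (i + 1) mod n \<or> i = (j + 1) mod n then -1 else 0)"

definition input_mat :: "nat \<Rightarrow> nat \<Rightarrow> nat \<Rightarrow> real mat" where
  "input_mat n i1 i2 = mat_of_cols n [unit_vec n (i1 - 1), unit_vec n (i2 - 1)]"

definition reach_mat :: "'a::field mat \<Rightarrow> 'a mat \<Rightarrow> 'a mat" where
  "reach_mat A B = mat_of_cols (dim_row A)
     (concat (map (\<lambda>k. cols ((A ^\<^sub>m k) * B)) [0..<dim_row A]))"

definition obs_mat :: "'a::field mat \<Rightarrow> 'a mat \<Rightarrow> 'a mat" where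
  "obs_mat A C = mat_of_rows (dim_row A)
     (concat (map (\<lambda>k. rows (C * (A ^\<^sub>m k))) [0..<dim_row A]))"

definition reachable :: "'a::field mat \<Rightarrow> 'a mat \<Rightarrow> bool" where
  "reachable A B \<longleftrightarrow> mat_rank (reach_mat A B) = dim_row A"

definition observable :: "'a::field mat \<Rightarrow> 'a mat \<Rightarrow> bool" where
  "observable A C \<longleftrightarrow> mat_rank (obs_mat A C) = dim_row A"

end

theory Submission
  imports Defs
begin

(* Since the Laplacian L is symmetric, the observability matrix of (L, B^T) is the transpose of
   the reachability matrix of (L, B), and over the reals both have full rank iff no nonzero x
   satisfies (L^k x)_a = (L^k x)_b = 0 for all k < n, where a and b are the two input nodes.

   Extend such an x n-periodically to a function f on the integers; L acts on it as the second
   difference (D f) j = 2 f j - f (j + 1) - f (j - 1). The symmetrisations of the iterates about a,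
   m |-> (D^k f) (a + m) + (D^k f) (a - m), obey the same recurrence in k and vanish at m = 0 for
   k < n, so they vanish for |m| < n: f is odd about a, and likewise about b. The two reflections
   compose to the translation by 2 (a - b), which together with the period n generates all of Z
   when n is an odd prime; hence f is constant, and zero since it is odd about a.

   If n is composite, pick a divisor m >= 3 of n and 0 < d < n with m dividing 2 d. The vector
   j |-> sin (2 pi j / m) is an eigenvector of L vanishing at the nodes 0 and d. *)

section \<open>Full rank via kernels\<close>

lemma (in vec_space) full_row_rank_iff_span_cols:
  assumes A: "A \<in> carrier_mat n nc"
  shows "rank A = n \<longleftrightarrow> span (set (cols A)) = carrier_vec n"
proof
  have cols: "set (cols A) \<subseteq> carrier_vec n" using A cols_dim by blast
  assume "rank A = n"
  have "lin_indpt {}"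
    by (metis empty_subsetI fin_dim finite_basis_exists subset_li_is_li vec_vs vectorspace.basis_def)
  then obtain S where S: "finite S" "maximal S (\<lambda>T. T \<subseteq> set (cols A) \<and> lin_indpt T)"
    using maximal_exists_superset[of "set (cols A)" "\<lambda>T. T \<subseteq> set (cols A) \<and> lin_indpt T" "{}"]
    by auto
  have li: "lin_indpt S" and sub: "S \<subseteq> set (cols A)" using S(2) unfolding maximal_def by auto
  have "card S = n" using rank_card_indpt[OF A S(2)] \<open>rank A = n\<close> by simp
  then have "basis S" using S(1) li sub cols by (intro dim_li_is_basis) (auto simp: dim_is_n)
  then have "span S = carrier_vec n" unfolding basis_def by auto
  moreover have "span S \<subseteq> span (set (cols A))" using sub cols by (intro span_is_monotone)
  ultimately show "span (set (cols A)) = carrier_vec n" using cols span_closed by blast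
next
  assume "span (set (cols A)) = carrier_vec n"
  then have "span_vs (set (cols A)) = V" by simp
  then show "rank A = n" unfolding rank_def using dim_is_n by simp
qed

lemma (in vec_space) mult_mat_vec_in_span_cols:
  assumes A: "A \<in> carrier_mat n nc" and w: "w \<in> carrier_vec nc"
  shows "A *\<^sub>v w \<in> span (set (cols A))"
proof -
  have cols: "set (cols A) \<subseteq> carrier_vec n" using A cols_dim by blast
  have "vec (length (cols A)) (\<lambda>i. w $ i) = w" using A w by auto
  moreover have "\<forall>v \<in> set (cols A). dim_vec v = n" using cols by auto
  ultimately have "A *\<^sub>v w = lincomb_list (\<lambda>i. w $ i) (cols A)"
    using lincomb_list_as_mat_mult[of "cols A" "\<lambda>i. w $ i"] mat_of_cols_cols[of A] A
    by auto
  also have "\<dots> \<in> span_list (cols A)" by (intro in_span_listI) auto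
  finally show ?thesis using span_list_as_span[OF cols] by simp
qed

lemma transpose_mult_vec_eq_0_iff:
  fixes A :: "'a::comm_semiring_0 mat"
  assumes A: "A \<in> carrier_mat n nc" and y: "y \<in> carrier_vec n"
  shows "transpose_mat A *\<^sub>v y = 0\<^sub>v nc \<longleftrightarrow> (\<forall>c \<in> set (cols A). y \<bullet> c = 0)"
proof -
  have "transpose_mat A *\<^sub>v y = 0\<^sub>v nc \<longleftrightarrow> (\<forall>j < nc. col A j \<bullet> y = 0)"
    using A by (auto simp: vec_eq_iff)
  also have "\<dots> \<longleftrightarrow> (\<forall>j < nc. y \<bullet> col A j = 0)"
    using A y comm_scalar_prod[of _ n y] by (metis carrier_matD(1) col_dim)
  also have "\<dots> \<longleftrightarrow> (\<forall>c \<in> set (cols A). y \<bullet> c = 0)"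
    using A by (auto simp: cols_def)
  finally show ?thesis .
qed

lemma scalar_prod_mult_unit_vec:
  fixes A :: "'a::comm_semiring_1 mat"
  assumes A: "A \<in> carrier_mat n n" and y: "y \<in> carrier_vec n" and a: "a < n"
  shows "y \<bullet> (A *\<^sub>v unit_vec n a) = (transpose_mat A *\<^sub>v y) $ a"
  using transpose_vec_mult_scalar[of A n n "unit_vec n a" y] A y a by simp

lemma full_row_rank_iff_transpose_kernel_trivial:
  fixes A :: "real mat"
  assumes A: "A \<in> carrier_mat n nc"
  shows "vec_space.rank n A = n \<longleftrightarrow>
    (\<forall>y \<in> carrier_vec n. transpose_mat A *\<^sub>v y = 0\<^sub>v nc \<longrightarrow> y = 0\<^sub>v n)"
proof -
  interpret vec_space "TYPE(real)" n .
  have cols: "set (cols A) \<subseteq> carrier_vec n" using A cols_dim by blast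
  show ?thesis
  proof (intro iffI ballI impI)
    fix y :: "real vec" assume "rank A = n" and y: "y \<in> carrier_vec n"
      and "transpose_mat A *\<^sub>v y = 0\<^sub>v nc"
    then have "y \<in> orthogonal_complement (set (cols A))"
      using transpose_mult_vec_eq_0_iff[OF A y] unfolding orthogonal_complement_def by auto
    then have "y \<in> orthogonal_complement (carrier_vec n)"
      using in_orthogonal_complement_span[OF cols] full_row_rank_iff_span_cols[OF A] \<open>rank A = n\<close>
      by simp
    then have "y \<bullet> y = 0" using y unfolding orthogonal_complement_def by auto
    then show "y = 0\<^sub>v n" using conjugate_square_eq_0_vec[OF y] by simp
  next
    assume ker: "\<forall>y \<in> carrier_vec n. transpose_mat A *\<^sub>v y = 0\<^sub>v nc \<longrightarrow> y = 0\<^sub>v n"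
    define M where "M = A * transpose_mat A"
    have M: "M \<in> carrier_mat n n" using A unfolding M_def by auto
    have "v = 0\<^sub>v n" if v: "v \<in> carrier_vec n" "M *\<^sub>v v = 0\<^sub>v n" for v
    proof -
      define w where "w = transpose_mat A *\<^sub>v v"
      have w: "w \<in> carrier_vec nc" using A v unfolding w_def by auto
      have "w \<bullet> w = v \<bullet> (M *\<^sub>v v)"
        using transpose_vec_mult_scalar[OF A w v(1)] A v unfolding w_def M_def by auto
      then have "w = 0\<^sub>v nc" using v conjugate_square_eq_0_vec[OF w] by simp
      then show ?thesis using ker v unfolding w_def by blast
    qed
    then have "rank M = n"
      using det_0_iff_vec_prod_zero_field[OF M] det_rank_iff[OF M] by blast
    then have "carrier_vec n = span (set (cols M))" using full_row_rank_iff_span_cols[OF M] by simp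
    also have "\<dots> \<subseteq> span (set (cols A))"
    proof (intro span_subsetI[OF cols] subsetI)
      fix c assume "c \<in> set (cols M)"
      then obtain j where j: "j < n" "c = col M j" using M by (auto simp: in_set_conv_nth)
      have "c = A *\<^sub>v col (transpose_mat A) j"
        unfolding j(2) M_def using A j(1) by (intro col_mult2[of _ n nc]) auto
      moreover have "col (transpose_mat A) j \<in> carrier_vec nc" using A j by simp
      ultimately show "c \<in> span (set (cols A))" using mult_mat_vec_in_span_cols[OF A] by simp
    qed
    finally show "rank A = n"
      using full_row_rank_iff_span_cols[OF A] span_closed[OF cols] by blast
  qed
qed

lemma (in vec_space) rank_le_card_set_cols:
  assumes A: "A \<in> carrier_mat n nc"
  shows "rank A \<le> card (set (cols A))"
proof -
  obtain S where S: "maximal S (\<lambda>T. T \<subseteq> set (cols A) \<and> lin_indpt T)"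
    using maximal_exists[of "\<lambda>T. T \<subseteq> set (cols A) \<and> lin_indpt T" "card (set (cols A))" "{}"]
    by (meson List.finite_set card_mono empty_iff empty_subsetI finite_lin_indpt2 rev_finite_subset)
  then have "card S \<le> card (set (cols A))" by (simp add: card_mono maximal_def)
  then show ?thesis using rank_card_indpt[OF A S] by simp
qed

lemma distinct_cols_if_kernel_trivial:
  fixes A :: "'a::ring_1 mat"
  assumes A: "A \<in> carrier_mat n nc"
    and ker: "\<forall>x \<in> carrier_vec nc. A *\<^sub>v x = 0\<^sub>v n \<longrightarrow> x = 0\<^sub>v nc"
  shows "distinct (cols A)"
proof (rule ccontr)
  assume "\<not> distinct (cols A)"
  then obtain i j where ij: "i < nc" "j < nc" "i \<noteq> j" "col A i = col A j"
    using A by (auto simp: distinct_conv_nth)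
  define x :: "'a vec" where "x = unit_vec nc i - unit_vec nc j"
  have "A *\<^sub>v x = 0\<^sub>v n"
  proof (rule eq_vecI)
    fix k assume "k < dim_vec (0\<^sub>v n :: 'a vec)"
    then have k: "k < n" by simp
    have "(A *\<^sub>v x) $ k = row A k \<bullet> unit_vec nc i - row A k \<bullet> unit_vec nc j"
      unfolding x_def using A k by (auto intro: scalar_prod_minus_distrib[of _ nc])
    also have "\<dots> = col A i $ k - col A j $ k" using A k ij(1,2) by simp
    finally show "(A *\<^sub>v x) $ k = 0\<^sub>v n $ k" using ij(4) k by simp
  qed (use A in auto)
  moreover have "x \<in> carrier_vec nc" unfolding x_def by simp
  moreover have "x $ i \<noteq> 0\<^sub>v nc $ i" unfolding x_def using ij by simp
  ultimately show False using ker by blast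
qed

lemma full_col_rank_iff_kernel_trivial:
  fixes A :: "'a::field mat"
  assumes A: "A \<in> carrier_mat n nc"
  shows "vec_space.rank n A = nc \<longleftrightarrow> (\<forall>x \<in> carrier_vec nc. A *\<^sub>v x = 0\<^sub>v n \<longrightarrow> x = 0\<^sub>v nc)"
proof -
  interpret vec_space "TYPE('a)" n .
  show ?thesis
  proof (intro iffI ballI impI)
    fix x assume r: "rank A = nc" and x: "x \<in> carrier_vec nc" "A *\<^sub>v x = 0\<^sub>v n"
    show "x = 0\<^sub>v nc"
    proof (rule ccontr)
      assume "x \<noteq> 0\<^sub>v nc"
      show False
      proof (cases "distinct (cols A)")
        case True
        then show False
          using full_rank_lin_indpt[OF A r] lin_depI[OF A x(1) \<open>x \<noteq> 0\<^sub>v nc\<close> x(2)] by blast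
      next
        case False
        then have "card (set (cols A)) < nc"
          using A card_distinct[of "cols A"] card_length[of "cols A"] by (auto simp: order_less_le)
        then show False using rank_le_card_set_cols[OF A] r by simp
      qed
    qed
  next
    assume ker: "\<forall>x \<in> carrier_vec nc. A *\<^sub>v x = 0\<^sub>v n \<longrightarrow> x = 0\<^sub>v nc"
    have dist: "distinct (cols A)" by (rule distinct_cols_if_kernel_trivial[OF A ker])
    have "lin_indpt (set (cols A))" using lin_depE[OF A _ dist] ker by blast
    then show "rank A = nc" using lin_indpt_full_rank[OF A dist] by simp
  qed
qed

section \<open>Reachability and observability matrices\<close>

lemma pow_mat_commute:
  fixes A :: "'a::semiring_1 mat"
  assumes A: "A \<in> carrier_mat n n"
  shows "A * A ^\<^sub>m k = A ^\<^sub>m k * A"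
proof (induction k)
  case (Suc k)
  have "A * A ^\<^sub>m Suc k = (A * A ^\<^sub>m k) * A" using A by (simp add: assoc_mult_mat[of _ n n _ n _ n])
  also have "\<dots> = A ^\<^sub>m Suc k * A" using Suc by simp
  finally show ?case .
qed (use A in simp)

lemma transpose_pow_mat:
  fixes A :: "'a::comm_semiring_1 mat"
  assumes A: "A \<in> carrier_mat n n"
  shows "transpose_mat (A ^\<^sub>m k) = transpose_mat A ^\<^sub>m k"
proof (induction k)
  case (Suc k)
  have "transpose_mat (A ^\<^sub>m Suc k) = transpose_mat A * transpose_mat (A ^\<^sub>m k)"
    using A by (simp add: transpose_mult[of _ n n _ n])
  also have "\<dots> = transpose_mat A ^\<^sub>m Suc k"
    using Suc pow_mat_commute[of "transpose_mat A" n k] A by simp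
  finally show ?case .
qed (use A in simp)

lemma cols_mult:
  assumes "A \<in> carrier_mat nr n" and "B \<in> carrier_mat n nc"
  shows "cols (A * B) = map ((*\<^sub>v) A) (cols B)"
  using assms by (intro nth_equalityI) auto

lemma reach_mat_carrier:
  assumes A: "A \<in> carrier_mat n n" and B: "B \<in> carrier_mat n m"
  shows "reach_mat A B \<in> carrier_mat n (n * m)"
proof -
  have "length (concat (map (\<lambda>k. cols (A ^\<^sub>m k * B)) [0..<n])) = n * m"
    using A B by (simp add: length_concat o_def sum_list_triv)
  then show ?thesis using A unfolding reach_mat_def by auto
qed

lemma set_cols_reach_mat:
  assumes A: "A \<in> carrier_mat n n" and B: "B \<in> carrier_mat n m"
  shows "set (cols (reach_mat A B)) = (\<Union>k<n. (*\<^sub>v) (A ^\<^sub>m k) ` set (cols B))"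
proof -
  have "set (concat (map (\<lambda>k. cols (A ^\<^sub>m k * B)) [0..<n])) \<subseteq> carrier_vec n"
    using A B cols_dim[of "A ^\<^sub>m _ * B"] by auto
  then show ?thesis
    using A B unfolding reach_mat_def
    by (simp add: cols_mult[of _ n n _ m] atLeast0LessThan)
qed

lemma obs_mat_transpose:
  assumes A: "A \<in> carrier_mat n n" and B: "B \<in> carrier_mat n m"
  shows "obs_mat (transpose_mat A) (transpose_mat B) = transpose_mat (reach_mat A B)"
proof -
  have "transpose_mat B * transpose_mat A ^\<^sub>m k = transpose_mat (A ^\<^sub>m k * B)" for k
    using A B transpose_mult[of "A ^\<^sub>m k" n n B m] transpose_pow_mat[OF A, of k] by simp
  then show ?thesis
    using A unfolding obs_mat_def reach_mat_def transpose_mat_of_cols by simp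
qed

lemma observable_transpose_iff_reachable:
  fixes A B :: "real mat"
  assumes A: "A \<in> carrier_mat n n" and B: "B \<in> carrier_mat n m"
  shows "observable (transpose_mat A) (transpose_mat B) \<longleftrightarrow> reachable A B"
proof -
  have R: "reach_mat A B \<in> carrier_mat n (n * m)" by (rule reach_mat_carrier[OF A B])
  then have "transpose_mat (reach_mat A B) \<in> carrier_mat (n * m) n" by simp
  then show ?thesis
    using A R unfolding observable_def reachable_def mat_rank_def obs_mat_transpose[OF A B]
    by (simp add: full_col_rank_iff_kernel_trivial full_row_rank_iff_transpose_kernel_trivial)
qed

lemma reachable_iff_no_orthogonal_vector:
  fixes A B :: "real mat"
  assumes A: "A \<in> carrier_mat n n" and B: "B \<in> carrier_mat n m"
  shows "reachable A B \<longleftrightarrow>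
    (\<forall>y \<in> carrier_vec n. (\<forall>k < n. \<forall>c \<in> set (cols B). y \<bullet> (A ^\<^sub>m k *\<^sub>v c) = 0) \<longrightarrow> y = 0\<^sub>v n)"
proof -
  have R: "reach_mat A B \<in> carrier_mat n (n * m)" by (rule reach_mat_carrier[OF A B])
  have "(\<forall>c \<in> set (cols (reach_mat A B)). y \<bullet> c = 0) \<longleftrightarrow>
      (\<forall>k < n. \<forall>c \<in> set (cols B). y \<bullet> (A ^\<^sub>m k *\<^sub>v c) = 0)" for y
    unfolding set_cols_reach_mat[OF A B] by blast
  then show ?thesis
    using A R unfolding reachable_def mat_rank_def
    by (simp add: full_row_rank_iff_transpose_kernel_trivial transpose_mult_vec_eq_0_iff)
qed

section \<open>The second difference operator on the integers\<close>

definition discrete_laplacian :: "(int \<Rightarrow> real) \<Rightarrow> int \<Rightarrow> real" where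
  "discrete_laplacian f j = 2 * f j - f (j + 1) - f (j - 1)"

lemma discrete_laplacian_sin:
  "discrete_laplacian (\<lambda>j. sin (\<theta> * of_int j)) = (\<lambda>j. (2 - 2 * cos \<theta>) * sin (\<theta> * of_int j))"
  by (auto simp: discrete_laplacian_def sin_add sin_diff algebra_simps)

lemma sin_add_int_mult_2pi: "sin (x + 2 * pi * of_int k) = sin x"
  by (simp add: sin_add)

lemma discrete_laplacian_iterates_vanish_near_center:
  fixes g :: "nat \<Rightarrow> int \<Rightarrow> real"
  assumes step: "\<And>k. g (Suc k) = discrete_laplacian (g k)"
    and even: "\<And>k m. g k (- m) = g k m"
    and center: "\<And>k. k < N \<Longrightarrow> g k 0 = 0"
    and "k + m < N"
  shows "g k (int m) = 0"
  using \<open>k + m < N\<close>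
proof (induction m arbitrary: k rule: less_induct)
  case (less m)
  consider "m = 0" | "m = 1" | m' where "m = m' + 2"
    by (metis One_nat_def add_2_eq_Suc' not0_implies_Suc)
  then show ?case
  proof cases
    case 1
    then show ?thesis using center less.prems by simp
  next
    case 2
    have "g (Suc k) 0 = 2 * g k 0 - 2 * g k 1"
      using step[of k] even[of k 1] by (simp add: discrete_laplacian_def)
    then show ?thesis using center[of k] center[of "Suc k"] less.prems 2 by simp
  next
    case 3
    have "g (Suc k) (int m' + 1) = 2 * g k (int m' + 1) - g k (int m' + 1 + 1) - g k (int m' + 1 - 1)"
      by (simp only: step discrete_laplacian_def)
    moreover have "int m' + 1 + 1 = int m" "int m' + 1 - 1 = int m'" using 3 by simp_all
    moreover have "g (Suc k) (int (m' + 1)) = 0" "g k (int (m' + 1)) = 0" "g k (int m') = 0"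
      using less.IH[of "m' + 1" "Suc k"] less.IH[of "m' + 1" k] less.IH[of m' k] less.prems 3
      by simp_all
    ultimately show ?thesis by (simp add: add.commute)
  qed
qed

lemma antisymmetric_about_laplacian_orbit_zero:
  fixes f :: "int \<Rightarrow> real"
  assumes n: "n > 0"
    and periodic: "\<And>j. f (j mod int n) = f j"
    and zero: "\<And>k. k < n \<Longrightarrow> (discrete_laplacian ^^ k) f a = 0"
  shows "f (a + m) = - f (a - m)"
proof -
  define g where "g k m = (discrete_laplacian ^^ k) f (a + m) + (discrete_laplacian ^^ k) f (a - m)"
    for k m
  have g0: "g 0 (int r) = 0" if "r < n" for r
  proof (rule discrete_laplacian_iterates_vanish_near_center[of g n])
    show "g (Suc k) = discrete_laplacian (g k)" for k
      by (auto simp: g_def discrete_laplacian_def algebra_simps)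
  qed (use zero that in \<open>auto simp: g_def\<close>)
  have "0 \<le> m mod int n" "m mod int n < int n" using n by simp_all
  then have "g 0 (m mod int n) = 0" using g0[of "nat (m mod int n)"] by simp
  moreover have "f (a + m mod int n) = f (a + m)" "f (a - m mod int n) = f (a - m)"
    using periodic by (metis mod_add_right_eq mod_diff_right_eq)+
  ultimately show ?thesis by (simp add: g_def)
qed

lemma periodic_int_multiple:
  fixes f :: "int \<Rightarrow> 'a"
  assumes period: "\<And>x. f (x + t) = f x"
  shows "f (x + k * t) = f x"
proof (induction k rule: int_induct[where k = 0])
  case (step1 i)
  then show ?case using period[of "x + i * t"] by (simp add: algebra_simps)
next
  case (step2 i)
  then show ?case using period[of "x + (i - 1) * t"] by (simp add: algebra_simps)
qed simp

lemma periodic_antisymmetric_about_two_points_eq_0: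
  fixes f :: "int \<Rightarrow> real"
  assumes p: "prime n" "n \<noteq> 2"
    and periodic: "\<And>j. f (j mod int n) = f j"
    and anti_a: "\<And>m. f (a + m) = - f (a - m)"
    and anti_b: "\<And>m. f (b + m) = - f (b - m)"
    and ab: "\<not> int n dvd a - b"
  shows "f j = 0"
proof -
  have period_ab: "f (x + 2 * (a - b)) = f x" for x
    using anti_a[of "x + a - 2 * b"] anti_b[of "b - x"] by (simp add: algebra_simps)
  have period_n: "f (x + int n) = f x" for x
    using periodic by (metis mod_add_self2)
  have "\<not> int n dvd 2"
  proof
    assume "int n dvd 2"
    then have "n \<le> 2" by (auto dest: zdvd_imp_le)
    then show False using p prime_ge_2_nat[of n] by simp
  qed
  then have "\<not> int n dvd 2 * (a - b)"
    using p ab prime_dvd_mult_iff[of "int n" 2 "a - b"] by simp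
  then have "gcd (2 * (a - b)) (int n) = 1"
    using p by (metis coprime_commute prime_imp_coprime prime_nat_int_transfer coprime_iff_gcd_eq_1)
  then obtain u v where uv: "u * (2 * (a - b)) + v * int n = 1"
    using bezout_int by metis
  have period_1: "f (x + 1) = f x" for x
    using periodic_int_multiple[of f "2 * (a - b)", OF period_ab, of "x + v * int n" u]
      periodic_int_multiple[of f "int n", OF period_n, of x v] uv
    by (simp add: algebra_simps)
  have "f a = 0" using anti_a[of 0] by simp
  then show ?thesis using periodic_int_multiple[of f 1, OF period_1, of a "j - a"] by simp
qed

section \<open>The Laplacian of the cycle\<close>

lemma cycle_laplacian_carrier [simp]: "cycle_laplacian n \<in> carrier_mat n n"
  unfolding cycle_laplacian_def by auto

lemma dim_cycle_laplacian [simp]: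
  "dim_row (cycle_laplacian n) = n" "dim_col (cycle_laplacian n) = n"
  unfolding cycle_laplacian_def by simp_all

lemma transpose_cycle_laplacian: "transpose_mat (cycle_laplacian n) = cycle_laplacian n"
  unfolding cycle_laplacian_def by (rule eq_matI) auto

lemma cycle_laplacian_mult_vec_index:
  fixes x :: "real vec"
  assumes n: "n \<ge> 3" and i: "i < n" and x: "x \<in> carrier_vec n"
  shows "(cycle_laplacian n *\<^sub>v x) $ i = 2 * x $ i - x $ ((i + 1) mod n) - x $ ((i + n - 1) mod n)"
proof -
  define p where "p = (i + 1) mod n"
  define q where "q = (i + n - 1) mod n"
  have p: "p = (if i + 1 = n then 0 else i + 1)" unfolding p_def using i by (auto simp: mod_if)
  have q: "q = (if i = 0 then n - 1 else i - 1)" unfolding q_def using i n by (auto simp: mod_if)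
  have "p < n" "q < n" using i p q by auto
  have entry: "cycle_laplacian n $$ (i, j) =
      (if j = i then 2 else 0) - (if j = p then 1 else 0) - (if j = q then 1 else 0)" if j: "j < n" for j
  proof -
    have "i = (j + 1) mod n \<longleftrightarrow> j = q" using i j n q by (auto simp: mod_if)
    then show ?thesis using i j n p q unfolding cycle_laplacian_def by (auto simp: p_def)
  qed
  have "(cycle_laplacian n *\<^sub>v x) $ i = (\<Sum>j<n. cycle_laplacian n $$ (i, j) * x $ j)"
    using i x by (simp add: scalar_prod_def lessThan_atLeast0 cycle_laplacian_def)
  also have "\<dots> = (\<Sum>j<n. (if j = i then 2 * x $ i else 0) - (if j = p then x $ p else 0)
      - (if j = q then x $ q else 0))"
    by (intro sum.cong) (auto simp: entry)
  also have "\<dots> = 2 * x $ i - x $ p - x $ q"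
    using i \<open>p < n\<close> \<open>q < n\<close> by (simp add: sum_subtractf)
  finally show ?thesis unfolding p_def q_def .
qed

definition periodic_ext :: "'a vec \<Rightarrow> int \<Rightarrow> 'a" where
  "periodic_ext x j = x $ nat (j mod int (dim_vec x))"

lemma periodic_ext_mod [simp]: "periodic_ext x (j mod int (dim_vec x)) = periodic_ext x j"
  unfolding periodic_ext_def by simp

lemma periodic_ext_of_nat [simp]: "i < dim_vec x \<Longrightarrow> periodic_ext x (int i) = x $ i"
  unfolding periodic_ext_def by simp

lemma periodic_ext_smult:
  assumes "dim_vec x > 0"
  shows "periodic_ext (c \<cdot>\<^sub>v x) = (\<lambda>j. c * periodic_ext x j)"
  using assms by (auto simp: periodic_ext_def nat_less_iff)

lemma periodic_ext_inject:
  assumes "dim_vec x = dim_vec y" and "periodic_ext x = periodic_ext y"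
  shows "x = y"
  using assms by (metis eq_vecI periodic_ext_of_nat)

lemma periodic_ext_cycle_laplacian:
  fixes x :: "real vec"
  assumes n: "n \<ge> 3" and x: "x \<in> carrier_vec n"
  shows "periodic_ext (cycle_laplacian n *\<^sub>v x) = discrete_laplacian (periodic_ext x)"
proof
  fix j :: int
  define i where "i = nat (j mod int n)"
  have i: "i < n" "int i = j mod int n" using n unfolding i_def by (simp_all add: nat_less_iff)
  have "(j + 1) mod int n = (int i + 1) mod int n"
    unfolding i(2) by (simp only: mod_add_left_eq)
  also have "\<dots> = int ((i + 1) mod n)" by (simp only: zmod_int of_nat_add of_nat_1)
  finally have succ: "(j + 1) mod int n = int ((i + 1) mod n)" .
  have "(j - 1) mod int n = (int i - 1) mod int n"
    unfolding i(2) by (simp only: mod_diff_left_eq)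
  also have "\<dots> = (int i - 1 + int n) mod int n" by (simp only: mod_add_self2)
  also have "int i - 1 + int n = int (i + n - 1)" using n by simp
  also have "int (i + n - 1) mod int n = int ((i + n - 1) mod n)" by (simp only: zmod_int)
  finally have pred: "(j - 1) mod int n = int ((i + n - 1) mod n)" .
  show "periodic_ext (cycle_laplacian n *\<^sub>v x) j = discrete_laplacian (periodic_ext x) j"
    using x n i succ pred cycle_laplacian_mult_vec_index[OF n i(1) x]
    by (simp add: periodic_ext_def discrete_laplacian_def i_def[symmetric])
qed

lemma periodic_ext_cycle_laplacian_pow:
  fixes x :: "real vec"
  assumes n: "n \<ge> 3" and x: "x \<in> carrier_vec n"
  shows "periodic_ext (cycle_laplacian n ^\<^sub>m k *\<^sub>v x) = (discrete_laplacian ^^ k) (periodic_ext x)"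
  using x
proof (induction k arbitrary: x)
  case (Suc k)
  have Lx: "cycle_laplacian n *\<^sub>v x \<in> carrier_vec n"
    by (rule mult_mat_vec_carrier[OF cycle_laplacian_carrier Suc.prems])
  have "cycle_laplacian n ^\<^sub>m Suc k *\<^sub>v x = cycle_laplacian n ^\<^sub>m k *\<^sub>v (cycle_laplacian n *\<^sub>v x)"
    using Suc.prems by (simp add: assoc_mult_mat_vec[of _ n n _ n])
  then have "periodic_ext (cycle_laplacian n ^\<^sub>m Suc k *\<^sub>v x)
      = (discrete_laplacian ^^ k) (periodic_ext (cycle_laplacian n *\<^sub>v x))"
    using Suc.IH[OF Lx] by simp
  also have "\<dots> = (discrete_laplacian ^^ Suc k) (periodic_ext x)"
    using periodic_ext_cycle_laplacian[OF n Suc.prems] by (simp add: funpow_swap1)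
  finally show ?case .
qed simp

lemma cycle_laplacian_orbit_vanishing_at_two_nodes_eq_0:
  fixes x :: "real vec"
  assumes p: "prime n" "n \<ge> 3" and ab: "a < n" "b < n" "a \<noteq> b" and x: "x \<in> carrier_vec n"
    and vanish_a: "\<And>k. k < n \<Longrightarrow> (cycle_laplacian n ^\<^sub>m k *\<^sub>v x) $ a = 0"
    and vanish_b: "\<And>k. k < n \<Longrightarrow> (cycle_laplacian n ^\<^sub>m k *\<^sub>v x) $ b = 0"
  shows "x = 0\<^sub>v n"
proof -
  define f where "f = periodic_ext x"
  have periodic: "f (j mod int n) = f j" for j
    using periodic_ext_mod[of x j] carrier_vecD[OF x] unfolding f_def by simp
  have orbit: "(discrete_laplacian ^^ k) f (int c) = (cycle_laplacian n ^\<^sub>m k *\<^sub>v x) $ c"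
    if "c < n" for k c
  proof -
    have "(discrete_laplacian ^^ k) f (int c) = periodic_ext (cycle_laplacian n ^\<^sub>m k *\<^sub>v x) (int c)"
      using periodic_ext_cycle_laplacian_pow[OF p(2) x] unfolding f_def by simp
    also have "\<dots> = (cycle_laplacian n ^\<^sub>m k *\<^sub>v x) $ c"
      using that by (intro periodic_ext_of_nat) simp
    finally show ?thesis .
  qed
  have anti_a: "f (int a + m) = - f (int a - m)" for m
    by (rule antisymmetric_about_laplacian_orbit_zero[of n f, OF _ periodic])
      (use p ab orbit vanish_a in auto)
  have anti_b: "f (int b + m) = - f (int b - m)" for m
    by (rule antisymmetric_about_laplacian_orbit_zero[of n f, OF _ periodic])
      (use p ab orbit vanish_b in auto)
  have "\<not> int n dvd int a - int b"
  proof
    assume "int n dvd int a - int b"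
    then have "int n \<le> \<bar>int a - int b\<bar>" using ab(3) dvd_imp_le_int[of "int a - int b" "int n"] by simp
    then show False using ab by linarith
  qed
  then have f0: "f j = 0" for j
    using periodic_antisymmetric_about_two_points_eq_0[of n f, OF p(1) _ periodic anti_a anti_b] p(2)
    by simp
  show ?thesis
  proof (rule eq_vecI)
    fix i assume "i < dim_vec (0\<^sub>v n :: real vec)"
    then have "x $ i = f (int i)" using x unfolding f_def by simp
    then show "x $ i = 0\<^sub>v n $ i" using f0 \<open>i < dim_vec (0\<^sub>v n)\<close> by simp
  qed (use x in simp)
qed

definition sine_vec :: "nat \<Rightarrow> nat \<Rightarrow> real vec" where
  "sine_vec n m = vec n (\<lambda>j. sin (2 * pi / m * j))"

lemma periodic_ext_sine_vec:
  assumes "m dvd n" and "n > 0"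
  shows "periodic_ext (sine_vec n m) = (\<lambda>j. sin (2 * pi / m * of_int j))"
proof
  fix j :: int
  obtain r where r: "n = m * r" using assms(1) by blast
  have m: "m > 0" using assms r by (cases m) auto
  have "real_of_int j = real_of_int (j mod int n) + real n * real_of_int (j div int n)"
    by (metis add.commute div_mult_mod_eq of_int_add of_int_mult of_int_of_nat_eq mult.commute)
  then have shift: "2 * pi / m * of_int (j mod int n) + 2 * pi * of_int (int r * (j div int n))
      = 2 * pi / m * of_int j"
    using m by (simp add: r field_simps)
  have "nat (j mod int n) < n" "j mod int n \<ge> 0" using assms(2) by (simp_all add: nat_less_iff)
  then have "periodic_ext (sine_vec n m) j = sin (2 * pi / m * of_int (j mod int n))"
    by (simp add: periodic_ext_def sine_vec_def)
  also have "\<dots> = sin (2 * pi / m * of_int j)"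
    using sin_add_int_mult_2pi[of "2 * pi / m * of_int (j mod int n)" "int r * (j div int n)"]
    unfolding shift by simp
  finally show "periodic_ext (sine_vec n m) j = sin (2 * pi / m * of_int j)" .
qed

lemma dim_vec_sine_vec [simp]: "dim_vec (sine_vec n m) = n"
  unfolding sine_vec_def by simp

lemma sine_vec_carrier [simp]: "sine_vec n m \<in> carrier_vec n"
  unfolding sine_vec_def by simp

lemma cycle_laplacian_sine_vec:
  assumes n: "n \<ge> 3" and m: "m dvd n"
  shows "cycle_laplacian n *\<^sub>v sine_vec n m = (2 - 2 * cos (2 * pi / m)) \<cdot>\<^sub>v sine_vec n m"
proof (rule periodic_ext_inject)
  have "n > 0" using n by simp
  have "periodic_ext (cycle_laplacian n *\<^sub>v sine_vec n m)
      = discrete_laplacian (periodic_ext (sine_vec n m))"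
    by (rule periodic_ext_cycle_laplacian[OF n sine_vec_carrier])
  also have "\<dots> = (\<lambda>j. (2 - 2 * cos (2 * pi / m)) * periodic_ext (sine_vec n m) j)"
    unfolding periodic_ext_sine_vec[OF m \<open>n > 0\<close>] discrete_laplacian_sin ..
  also have "\<dots> = periodic_ext ((2 - 2 * cos (2 * pi / m)) \<cdot>\<^sub>v sine_vec n m)"
    by (rule periodic_ext_smult[symmetric]) (simp add: \<open>n > 0\<close>)
  finally show "periodic_ext (cycle_laplacian n *\<^sub>v sine_vec n m)
      = periodic_ext ((2 - 2 * cos (2 * pi / m)) \<cdot>\<^sub>v sine_vec n m)" .
qed simp

lemma cycle_laplacian_pow_sine_vec:
  assumes n: "n \<ge> 3" and m: "m dvd n"
  shows "cycle_laplacian n ^\<^sub>m k *\<^sub>v sine_vec n m = (2 - 2 * cos (2 * pi / m)) ^ k \<cdot>\<^sub>v sine_vec n m"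
proof (induction k)
  case (Suc k)
  have "cycle_laplacian n ^\<^sub>m Suc k *\<^sub>v sine_vec n m
      = cycle_laplacian n ^\<^sub>m k *\<^sub>v (cycle_laplacian n *\<^sub>v sine_vec n m)"
    by (simp add: assoc_mult_mat_vec[of _ n n _ n])
  also have "\<dots> = (2 - 2 * cos (2 * pi / m)) \<cdot>\<^sub>v (cycle_laplacian n ^\<^sub>m k *\<^sub>v sine_vec n m)"
    unfolding cycle_laplacian_sine_vec[OF n m] by (simp add: mult_mat_vec[of _ n n])
  finally show ?case using Suc by (simp add: smult_smult_assoc)
qed simp

lemma composite_divisor_half_period:
  fixes n :: nat
  assumes "n \<ge> 3" and "\<not> prime n"
  obtains m d where "m dvd n" "m \<ge> 3" "0 < d" "d < n" "m dvd 2 * d"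
proof (cases "even n")
  case True
  then show ?thesis using assms by (intro that[of n "n div 2"]) auto
next
  case False
  obtain a where a: "a dvd n" "a \<noteq> 1" "a \<noteq> n"
    using assms unfolding prime_nat_iff by auto
  have "odd a" using False a(1) by (auto dest: dvd_trans)
  then have "a \<ge> 3" using a(2) by presburger
  moreover have "a < n" using a assms by (simp add: dvd_imp_le le_neq_implies_less)
  ultimately show ?thesis using a(1) by (intro that[of a a]) auto
qed

lemma cycle_laplacian_nonzero_orbit_vanishing_at_two_nodes:
  assumes n: "n \<ge> 3" and "\<not> prime n"
  obtains d x where "0 < d" "d < n" "x \<in> carrier_vec n" "x \<noteq> 0\<^sub>v n"
    "\<And>k. (cycle_laplacian n ^\<^sub>m k *\<^sub>v x) $ 0 = 0"
    "\<And>k. (cycle_laplacian n ^\<^sub>m k *\<^sub>v x) $ d = 0"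
proof -
  obtain m d where md: "m dvd n" "m \<ge> 3" "0 < d" "d < n" "m dvd 2 * d"
    using composite_divisor_half_period[OF assms] .
  obtain l where l: "2 * d = m * l" using md(5) by blast
  have "sine_vec n m $ d = sin (pi * l)"
    using md(2,4) arg_cong[OF l, of real] by (simp add: sine_vec_def field_simps)
  then have zero_d: "sine_vec n m $ d = 0" by simp
  have "sine_vec n m $ 1 = sin (2 * pi / m)" using n by (simp add: sine_vec_def)
  moreover have "0 < sin (2 * pi / m)" using md(2) by (intro sin_gt_zero) (auto simp: field_simps)
  ultimately have "sine_vec n m \<noteq> 0\<^sub>v n" using n by auto
  moreover have "sine_vec n m $ 0 = 0" using n by (simp add: sine_vec_def)
  ultimately show ?thesis
    using md zero_d n
    by (intro that[of d "sine_vec n m"]) (simp_all add: cycle_laplacian_pow_sine_vec[OF n])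
qed

lemma cols_input_mat: "cols (input_mat n i1 i2) = [unit_vec n (i1 - 1), unit_vec n (i2 - 1)]"
  unfolding input_mat_def by simp

lemma input_mat_carrier: "input_mat n i1 i2 \<in> carrier_mat n 2"
  unfolding input_mat_def by (rule carrier_matI) simp_all

lemma reachable_cycle_iff_orbit_vanishing:
  assumes n: "n \<ge> 3" and a: "a < n" and b: "b < n"
  shows "reachable (cycle_laplacian n) (input_mat n (a + 1) (b + 1)) \<longleftrightarrow>
    (\<forall>x \<in> carrier_vec n. (\<forall>k < n. (cycle_laplacian n ^\<^sub>m k *\<^sub>v x) $ a = 0
        \<and> (cycle_laplacian n ^\<^sub>m k *\<^sub>v x) $ b = 0) \<longrightarrow> x = 0\<^sub>v n)"
proof -
  have "transpose_mat (cycle_laplacian n ^\<^sub>m k) = cycle_laplacian n ^\<^sub>m k" for k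
    using transpose_pow_mat[OF cycle_laplacian_carrier] transpose_cycle_laplacian by metis
  then have "y \<bullet> (cycle_laplacian n ^\<^sub>m k *\<^sub>v unit_vec n c) = (cycle_laplacian n ^\<^sub>m k *\<^sub>v y) $ c"
    if "y \<in> carrier_vec n" "c < n" for y k c
    using scalar_prod_mult_unit_vec[OF pow_carrier_mat[OF cycle_laplacian_carrier] that] by simp
  then show ?thesis
    using a b unfolding reachable_iff_no_orthogonal_vector[OF cycle_laplacian_carrier input_mat_carrier]
    by (simp add: cols_input_mat)
qed

lemma cycle_reachable_from_all_pairs_iff_prime:
  assumes n: "n \<ge> 3"
  shows "(\<forall>i1 \<in> {1..n}. \<forall>i2 \<in> {1..n}. i1 \<noteq> i2 \<longrightarrow>
      reachable (cycle_laplacian n) (input_mat n i1 i2)) \<longleftrightarrow> prime n"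
proof
  assume all: "\<forall>i1 \<in> {1..n}. \<forall>i2 \<in> {1..n}. i1 \<noteq> i2 \<longrightarrow>
      reachable (cycle_laplacian n) (input_mat n i1 i2)"
  show "prime n"
  proof (rule ccontr)
    assume "\<not> prime n"
    then obtain d x where dx: "0 < d" "d < n" "x \<in> carrier_vec n" "x \<noteq> 0\<^sub>v n"
      "\<And>k. (cycle_laplacian n ^\<^sub>m k *\<^sub>v x) $ 0 = 0"
      "\<And>k. (cycle_laplacian n ^\<^sub>m k *\<^sub>v x) $ d = 0"
      using cycle_laplacian_nonzero_orbit_vanishing_at_two_nodes[OF n] by metis
    have "reachable (cycle_laplacian n) (input_mat n (0 + 1) (d + 1))" using all dx by auto
    then show False using reachable_cycle_iff_orbit_vanishing[OF n _ dx(2)] n dx by auto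
  qed
next
  assume "prime n"
  show "\<forall>i1 \<in> {1..n}. \<forall>i2 \<in> {1..n}. i1 \<noteq> i2 \<longrightarrow>
      reachable (cycle_laplacian n) (input_mat n i1 i2)"
  proof (intro ballI impI)
    fix i1 i2 assume i: "i1 \<in> {1..n}" "i2 \<in> {1..n}" "i1 \<noteq> i2"
    then have "reachable (cycle_laplacian n) (input_mat n (i1 - 1 + 1) (i2 - 1 + 1))"
      using reachable_cycle_iff_orbit_vanishing[OF n, of "i1 - 1" "i2 - 1"]
        cycle_laplacian_orbit_vanishing_at_two_nodes_eq_0[OF \<open>prime n\<close> n, of "i1 - 1" "i2 - 1"]
      by auto
    then show "reachable (cycle_laplacian n) (input_mat n i1 i2)" using i by simp
  qed
qed

theorem mainTheorem11:
  fixes n :: nat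
  assumes "n \<ge> 3"
  shows "((\<forall>i1\<in>{1..n}. \<forall>i2\<in>{1..n}. i1 \<noteq> i2 \<longrightarrow>
             reachable (cycle_laplacian n) (input_mat n i1 i2)) \<longleftrightarrow> prime n)
       \<and> ((\<forall>i1\<in>{1..n}. \<forall>i2\<in>{1..n}. i1 \<noteq> i2 \<longrightarrow>
             observable (cycle_laplacian n) (transpose_mat (input_mat n i1 i2))) \<longleftrightarrow> prime n)"
proof -
  have "observable (cycle_laplacian n) (transpose_mat (input_mat n i1 i2))
      \<longleftrightarrow> reachable (cycle_laplacian n) (input_mat n i1 i2)" for i1 i2
    using observable_transpose_iff_reachable[OF cycle_laplacian_carrier input_mat_carrier]
    by (simp add: transpose_cycle_laplacian)
  then show ?thesis using cycle_reachable_from_all_pairs_iff_prime[OF assms] by simp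
qed

end
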